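(* Let $1<\alpha<2$ and $\beta\geq 1$ with $\alpha-\beta+1>0$, and let $\tau>0$. Assume that $A$ is a closed linear operator on a Banach space $X$ which is $\omega$-sectorial of angle $\frac{(\alpha-1)\pi}{2}$ for some $\omega<0$. Then $A$ generates a discrete $(\alpha,\beta)$-resolvent family $\{S_{\alpha,\beta}^n\}_{n\in\mathbb{N}_0}\subset\mathcal{B}(X)$.
   Context: Fix a step size $\tau>0$. For $\gamma>0$ and $n\in\mathbb{N}_0$ let $k_\tau^\gamma(n):=\frac{\tau^{\gamma-1}\Gamma(\gamma+n)}{\Gamma(\gamma)\Gamma(n+1)}$. For $\alpha,\beta>0$, a sequence $\{S_{\alpha,\beta}^n\}_{n\in\mathbb{N}_0}\subset\mathcal{B}(X)$ is called a discrete $(\alpha,\beta)$-resolvent family generated by the closed operator $A:D(A)\subset X\to X$ if (1) $S^n_{\alpha,\beta}x\in D(A)$ for all $x\in X$, $n\in\mathbb N_0$, and $AS_{\alpha,\beta}^nx=S_{\alpha,\beta}^nAx$ for all $x\in D(A)$, $n\in\mathbb{N}_0$; (2) for every $x\in X$ and $n\in\mathbb{N}_0$, $S_{\alpha,\beta}^nx=k^\beta_\tau(n)x+\tau A\sum_{j=0}^n k^\alpha_\tau(n-j)S_{\alpha,\beta}^jx$. An operator $A$ is $\omega$-sectorial of angle $\theta$ (with $\theta\in[0,\pi/2)$, $\omega\in\mathbb R$) if its resolvent exists on $\omega+\Sigma_\theta:=\{\omega+\lambda:\lambda\in\mathbb C\setminus\{0\},\ |\arg\lambda|<\frac{\pi}{2}+\theta\}$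 and there is $M>0$ with $\|(\lambda-A)^{-1}\|\le \frac{M}{|\lambda-\omega|}$ for all $\lambda\in\omega+\Sigma_\theta$. *)

theory Defs
  imports "HOL-Analysis.Analysis"
begin

text \<open>A complex Banach space is modelled as a real Banach space of type 'a::banach
  together with a complex scalar multiplication sc extending the real one and
  compatible with the norm.\<close>
definition complex_scalar :: "(complex \<Rightarrow> 'a::banach \<Rightarrow> 'a) \<Rightarrow> bool" where
  "complex_scalar sc \<longleftrightarrow>
     (\<forall>a b x y. sc a (x + y) = sc a x + sc a y \<and> sc (a + b) x = sc a x + sc b x
        \<and> sc (a * b) x = sc a (sc b x) \<and> norm (sc a x) = cmod a * norm x)
   \<and> (\<forall>r x. sc (complex_of_real r) x = r *\<^sub>R x)"

definition bounded_op :: "(complex \<Rightarrow> 'a::banach \<Rightarrow> 'a) \<Rightarrow> ('a \<Rightarrow> 'a) \<Rightarrow> bool" where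
  "bounded_op sc T \<longleftrightarrow> bounded_linear T \<and> (\<forall>c x. T (sc c x) = sc c (T x))"

definition closed_linear_op :: "(complex \<Rightarrow> 'a::banach \<Rightarrow> 'a) \<Rightarrow> 'a set \<Rightarrow> ('a \<Rightarrow> 'a) \<Rightarrow> bool" where
  "closed_linear_op sc D A \<longleftrightarrow>
     0 \<in> D \<and> (\<forall>x\<in>D. \<forall>y\<in>D. x + y \<in> D \<and> A (x + y) = A x + A y)
   \<and> (\<forall>c. \<forall>x\<in>D. sc c x \<in> D \<and> A (sc c x) = sc c (A x))
   \<and> closed {(x, A x) | x. x \<in> D}"

definition is_resolvent :: "(complex \<Rightarrow> 'a::banach \<Rightarrow> 'a) \<Rightarrow> 'a set \<Rightarrow> ('a \<Rightarrow> 'a) \<Rightarrow> complex \<Rightarrow> ('a \<Rightarrow> 'a) \<Rightarrow> bool" where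
  "is_resolvent sc D A l R \<longleftrightarrow> bounded_op sc R
     \<and> (\<forall>y. R y \<in> D \<and> sc l (R y) - A (R y) = y)
     \<and> (\<forall>x\<in>D. R (sc l x - A x) = x)"

definition sector :: "real \<Rightarrow> real \<Rightarrow> complex set" where
  "sector \<omega> \<theta> = {complex_of_real \<omega> + z | z. z \<noteq> 0 \<and> \<bar>Arg z\<bar> < pi / 2 + \<theta>}"

definition omega_sectorial :: "(complex \<Rightarrow> 'a::banach \<Rightarrow> 'a) \<Rightarrow> 'a set \<Rightarrow> ('a \<Rightarrow> 'a) \<Rightarrow> real \<Rightarrow> real \<Rightarrow> bool" where
  "omega_sectorial sc D A \<omega> \<theta> \<longleftrightarrow> 0 \<le> \<theta> \<and> \<theta> < pi / 2 \<and>
     (\<exists>M>0. \<forall>l\<in>sector \<omega> \<theta>. \<exists>R. is_resolvent sc D A l R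
        \<and> (\<forall>y. norm (R y) \<le> M / cmod (l - complex_of_real \<omega>) * norm y))"

definition ktau :: "real \<Rightarrow> real \<Rightarrow> nat \<Rightarrow> real" where
  "ktau \<tau> \<gamma> n = \<tau> powr (\<gamma> - 1) * Gamma (\<gamma> + real n) / (Gamma \<gamma> * Gamma (real n + 1))"

definition discrete_resolvent_family ::
  "(complex \<Rightarrow> 'a::banach \<Rightarrow> 'a) \<Rightarrow> real \<Rightarrow> real \<Rightarrow> real \<Rightarrow> 'a set \<Rightarrow> ('a \<Rightarrow> 'a) \<Rightarrow> (nat \<Rightarrow> 'a \<Rightarrow> 'a) \<Rightarrow> bool" where
  "discrete_resolvent_family sc \<tau> \<alpha> \<beta> D A S \<longleftrightarrow>
     (\<forall>n. bounded_op sc (S n))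
   \<and> (\<forall>n x. S n x \<in> D)
   \<and> (\<forall>n. \<forall>x\<in>D. A (S n x) = S n (A x))
   \<and> (\<forall>n x. S n x = ktau \<tau> \<beta> n *\<^sub>R x
          + \<tau> *\<^sub>R A (\<Sum>j\<le>n. ktau \<tau> \<alpha> (n - j) *\<^sub>R S j x))"

end

theory Submission imports Defs begin

text \<open>Since \<open>ktau \<tau> \<alpha> 0 = \<tau> powr (\<alpha> - 1)\<close>, the defining identity of \<open>S n\<close> reads
  \<open>(I - \<tau> powr \<alpha> A) (S n x) = Y n x\<close>, where \<open>Y n x\<close> involves only \<open>S 0, \<dots>, S (n - 1)\<close>.
  Hence \<open>S n x = l (l - A)\<^sup>-\<^sup>1 (Y n x)\<close> defines the family recursively, and boundedness,
  complex linearity and commutation with \<open>A\<close> are inherited from the resolvent by strong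
  induction on \<open>n\<close>.\<close>

fun volterra_solution ::
  "real \<Rightarrow> ('a::real_vector \<Rightarrow> 'a) \<Rightarrow> real \<Rightarrow> (nat \<Rightarrow> real) \<Rightarrow> (nat \<Rightarrow> real)
    \<Rightarrow> ('a \<Rightarrow> 'a) \<Rightarrow> nat \<Rightarrow> 'a \<Rightarrow> 'a" where
  "volterra_solution l R \<tau> kb ka A n x =
     l *\<^sub>R R (kb n *\<^sub>R x + \<tau> *\<^sub>R (\<Sum>j<n. ka (n - j) *\<^sub>R A (volterra_solution l R \<tau> kb ka A j x)))"

declare volterra_solution.simps [simp del]

lemma complex_scalar_add: "complex_scalar sc \<Longrightarrow> sc c (x + y) = sc c x + sc c y"
  unfolding complex_scalar_def by blast

lemma complex_scalar_of_real: "complex_scalar sc \<Longrightarrow> sc (complex_of_real r) x = r *\<^sub>R x"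
  unfolding complex_scalar_def by blast

lemma complex_scalar_scaleR:
  assumes "complex_scalar sc"
  shows "sc c (r *\<^sub>R x) = r *\<^sub>R sc c x"
proof -
  have "sc c (r *\<^sub>R x) = sc (c * complex_of_real r) x"
    using assms unfolding complex_scalar_def by metis
  also have "\<dots> = r *\<^sub>R sc c x"
    using assms unfolding complex_scalar_def by (metis mult.commute)
  finally show ?thesis .
qed

lemma complex_scalar_sum:
  assumes "complex_scalar sc"
  shows "sc c (\<Sum>i\<in>I. f i) = (\<Sum>i\<in>I. sc c (f i))"
proof (induction I rule: infinite_finite_induct)
  case (insert i I)
  then show ?case by (simp add: complex_scalar_add[OF assms])
qed (use complex_scalar_scaleR[OF assms, of c 0 0] in simp_all)

context
  fixes sc :: "complex \<Rightarrow> 'a::banach \<Rightarrow> 'a" and D A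
  assumes scalar: "complex_scalar sc" and closed_op: "closed_linear_op sc D A"
begin

lemma closed_linear_op_add: "x \<in> D \<Longrightarrow> y \<in> D \<Longrightarrow> x + y \<in> D \<and> A (x + y) = A x + A y"
  using closed_op unfolding closed_linear_op_def by blast

lemma closed_linear_op_complex: "x \<in> D \<Longrightarrow> sc c x \<in> D \<and> A (sc c x) = sc c (A x)"
  using closed_op unfolding closed_linear_op_def by blast

lemma closed_linear_op_scaleR: "x \<in> D \<Longrightarrow> r *\<^sub>R x \<in> D \<and> A (r *\<^sub>R x) = r *\<^sub>R A x"
  using closed_linear_op_complex[of x "complex_of_real r"] by (simp add: complex_scalar_of_real[OF scalar])

lemma closed_linear_op_zero: "0 \<in> D \<and> A 0 = 0"
  using closed_op closed_linear_op_scaleR[of 0 0] unfolding closed_linear_op_def by simp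

lemma closed_linear_op_sum:
  assumes "\<And>i. i \<in> I \<Longrightarrow> f i \<in> D"
  shows "sum f I \<in> D \<and> A (sum f I) = (\<Sum>i\<in>I. A (f i))"
  using assms
proof (induction I rule: infinite_finite_induct)
  case (insert i I)
  then show ?case by (simp add: closed_linear_op_add)
qed (simp_all add: closed_linear_op_zero)

lemma closed_linear_op_scaled_sum:
  assumes "\<And>i. i \<in> I \<Longrightarrow> f i \<in> D"
  shows "(\<Sum>i\<in>I. c i *\<^sub>R f i) \<in> D \<and> A (\<Sum>i\<in>I. c i *\<^sub>R f i) = (\<Sum>i\<in>I. c i *\<^sub>R A (f i))"
  using closed_linear_op_sum[of I "\<lambda>i. c i *\<^sub>R f i"] assms closed_linear_op_scaleR by simp

context
  fixes l :: real and R
  assumes R: "is_resolvent sc D A (complex_of_real l) R"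
begin

lemma resolvent_bounded_linear: "bounded_linear R"
  using R unfolding is_resolvent_def bounded_op_def by blast

lemma resolvent_in_domain: "R y \<in> D"
  using R unfolding is_resolvent_def by blast

lemma resolvent_apply: "A (R y) = l *\<^sub>R R y - y"
  using R unfolding is_resolvent_def by (simp add: complex_scalar_of_real[OF scalar] algebra_simps)

lemma resolvent_commute:
  assumes "z \<in> D"
  shows "R (A z) = A (R z)"
proof -
  have "R (l *\<^sub>R z - A z) = z"
    using R assms unfolding is_resolvent_def by (simp add: complex_scalar_of_real[OF scalar])
  then have "l *\<^sub>R R z - R (A z) = z"
    by (simp add: linear_simps resolvent_bounded_linear)
  then show ?thesis by (simp add: resolvent_apply algebra_simps)
qed

lemma resolvent_complex_linear: "R (sc c y) = sc c (R y)"
  using R unfolding is_resolvent_def bounded_op_def by blast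

context
  fixes \<tau> :: real and kb ka :: "nat \<Rightarrow> real"
begin

abbreviation S where "S \<equiv> volterra_solution l R \<tau> kb ka A"

abbreviation Y where "Y n x \<equiv> kb n *\<^sub>R x + \<tau> *\<^sub>R (\<Sum>j<n. ka (n - j) *\<^sub>R A (S j x))"

lemma volterra_solution_eq: "S n x = l *\<^sub>R R (Y n x)"
  by (subst volterra_solution.simps) (rule refl)

lemma volterra_solution_in_domain: "S n x \<in> D"
  unfolding volterra_solution_eq[of n x] by (simp add: closed_linear_op_scaleR resolvent_in_domain)

lemma volterra_solution_apply: "A (S n x) = l *\<^sub>R (l *\<^sub>R R (Y n x) - Y n x)"
  unfolding volterra_solution_eq[of n x]
  by (simp add: closed_linear_op_scaleR resolvent_in_domain resolvent_apply)

lemma volterra_solution_bounded_linear: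
  "bounded_linear (S n) \<and> bounded_linear (\<lambda>x. A (S n x))"
proof (induction n rule: less_induct)
  case (less n)
  have Y: "bounded_linear (Y n)"
    using less by (intro bounded_linear_add bounded_linear_scaleR_right bounded_linear_ident
        bounded_linear_sum bounded_linear_compose[OF bounded_linear_scaleR_right]) auto
  have RY: "bounded_linear (\<lambda>x. R (Y n x))"
    by (rule bounded_linear_compose[OF resolvent_bounded_linear Y])
  have S: "S n = (\<lambda>x. l *\<^sub>R R (Y n x))"
    using volterra_solution_eq by blast
  have AS: "(\<lambda>x. A (S n x)) = (\<lambda>x. l *\<^sub>R (l *\<^sub>R R (Y n x) - Y n x))"
    using volterra_solution_apply by blast
  show ?case
    unfolding AS unfolding S using Y RY
    by (intro conjI bounded_linear_compose[OF bounded_linear_scaleR_right] bounded_linear_sub)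
qed

lemma volterra_solution_complex_linear: "S n (sc c x) = sc c (S n x)"
proof (induction n rule: less_induct)
  case (less n)
  have "Y n (sc c x) = sc c (Y n x)"
    using less by (simp add: complex_scalar_add[OF scalar] complex_scalar_scaleR[OF scalar]
        complex_scalar_sum[OF scalar] closed_linear_op_complex volterra_solution_in_domain)
  then show ?case
    by (simp add: volterra_solution_eq[of n] resolvent_complex_linear complex_scalar_scaleR[OF scalar])
qed

lemma volterra_solution_commute:
  assumes "x \<in> D"
  shows "S n (A x) = A (S n x)"
proof (induction n rule: less_induct)
  case (less n)
  have ASD: "A (S j x) \<in> D" if "j < n" for j
    using less that volterra_solution_in_domain by metis
  have sum: "(\<Sum>j<n. ka (n - j) *\<^sub>R A (S j x)) \<in> D \<and>
      A (\<Sum>j<n. ka (n - j) *\<^sub>R A (S j x)) = (\<Sum>j<n. ka (n - j) *\<^sub>R A (A (S j x)))"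
    using ASD by (intro closed_linear_op_scaled_sum) auto
  have YD: "Y n x \<in> D" and AY: "A (Y n x) = Y n (A x)"
    using assms sum less
    by (auto simp add: closed_linear_op_add closed_linear_op_scaleR intro!: sum.cong)
  show ?case
    using AY resolvent_commute[OF YD]
    by (simp add: volterra_solution_eq[of n] closed_linear_op_scaleR resolvent_in_domain)
qed

lemma volterra_solution_equation:
  assumes "\<tau> * ka 0 * l = 1"
  shows "S n x = kb n *\<^sub>R x + \<tau> *\<^sub>R A (\<Sum>j\<le>n. ka (n - j) *\<^sub>R S j x)"
proof -
  have "A (\<Sum>j\<le>n. ka (n - j) *\<^sub>R S j x) = (\<Sum>j\<le>n. ka (n - j) *\<^sub>R A (S j x))"
    by (rule conjunct2[OF closed_linear_op_scaled_sum]) (rule volterra_solution_in_domain)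
  also have "\<dots> = (\<Sum>j<n. ka (n - j) *\<^sub>R A (S j x)) + ka 0 *\<^sub>R A (S n x)"
    by (simp add: lessThan_Suc_atMost[symmetric])
  finally have "kb n *\<^sub>R x + \<tau> *\<^sub>R A (\<Sum>j\<le>n. ka (n - j) *\<^sub>R S j x)
      = Y n x + (\<tau> * ka 0 * l) *\<^sub>R (l *\<^sub>R R (Y n x) - Y n x)"
    by (simp add: volterra_solution_apply[of n x] scaleR_add_right add.assoc)
  also have "\<dots> = S n x"
    by (simp add: assms volterra_solution_eq[of n x])
  finally show ?thesis by simp
qed

end

lemma volterra_solution_discrete_resolvent_family:
  assumes "\<tau> * ktau \<tau> \<alpha> 0 * l = 1"
  shows "discrete_resolvent_family sc \<tau> \<alpha> \<beta> D A (volterra_solution l R \<tau> (ktau \<tau> \<beta>) (ktau \<tau> \<alpha>) A)"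
  unfolding discrete_resolvent_family_def bounded_op_def
  by (intro conjI allI ballI volterra_solution_bounded_linear[THEN conjunct1]
      volterra_solution_complex_linear volterra_solution_in_domain
      volterra_solution_commute[symmetric]
      volterra_solution_equation[where ka = "ktau \<tau> \<alpha>" and kb = "ktau \<tau> \<beta>", OF assms])

end

end

lemma ktau_0: "0 < \<gamma> \<Longrightarrow> ktau \<tau> \<gamma> 0 = \<tau> powr (\<gamma> - 1)"
  unfolding ktau_def by (auto simp add: Gamma_eq_zero_iff elim!: nonpos_Ints_cases)

lemma of_real_in_sector:
  assumes "\<omega> < l" and "0 \<le> \<theta>"
  shows "complex_of_real l \<in> sector \<omega> \<theta>"
proof -
  have "complex_of_real l = complex_of_real \<omega> + complex_of_real (l - \<omega>)"
    by simp
  moreover have "Arg (complex_of_real (l - \<omega>)) = 0"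
    using assms(1) by (simp only: Arg_of_real) simp
  moreover have "0 < pi / 2 + \<theta>"
    using assms(2) pi_gt_zero by linarith
  ultimately show ?thesis
    unfolding sector_def using assms by (auto intro!: exI[of _ "complex_of_real (l - \<omega>)"])
qed

theorem theorem3p5:
  fixes sc :: "complex \<Rightarrow> 'a::banach \<Rightarrow> 'a"
    and D :: "'a set" and A :: "'a \<Rightarrow> 'a"
    and \<alpha> \<beta> \<tau> \<omega> :: real
  assumes "complex_scalar sc"
    and "1 < \<alpha>" and "\<alpha> < 2" and "1 \<le> \<beta>" and "\<alpha> - \<beta> + 1 > 0" and "\<tau> > 0"
    and "closed_linear_op sc D A"
    and "\<omega> < 0"
    and "omega_sectorial sc D A \<omega> ((\<alpha> - 1) * pi / 2)"
  shows "\<exists>S. discrete_resolvent_family sc \<tau> \<alpha> \<beta> D A S"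
proof -
  define l where "l = 1 / \<tau> powr \<alpha>"
  have "0 < l"
    using \<open>\<tau> > 0\<close> by (simp add: l_def)
  then have "\<omega> < l"
    using \<open>\<omega> < 0\<close> by linarith
  moreover have "0 \<le> (\<alpha> - 1) * pi / 2"
    using \<open>1 < \<alpha>\<close> by simp
  ultimately obtain R where R: "is_resolvent sc D A (complex_of_real l) R"
    using assms(9) of_real_in_sector unfolding omega_sectorial_def by blast
  have "\<tau> * ktau \<tau> \<alpha> 0 * l = 1"
    using \<open>1 < \<alpha>\<close> \<open>\<tau> > 0\<close> by (simp add: ktau_0 l_def powr_diff)
  then show ?thesis
    using volterra_solution_discrete_resolvent_family[OF assms(1,7) R] by blast
qed

end
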